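(* Let $X$ be a real Banach space and $Q:X^{**}\to X^{**}$ a projection with $Q[X^{**}]=\kappa_X(X)$ such that $\|f\|>\|f-Qf\|$ for every $f\notin\ker Q$. If $G$ is a group acting on $X$ by affine isometries, then $\pi(g)f\in\ker Q$ for every $g\in G$ and $f\in\ker Q$, where $\pi$ acts on $X^{**}$ by the bidual of the linear part of the action.
   Context: $\kappa_X$ is the canonical embedding of $X$ into $X^{**}$. For an action by affine isometries $(g,x)\mapsto gx$, $\pi(g)x:=gx-g0$ is its linear part (an action by linear surjective isometries); it acts on $X^*$ by $(\pi(g)x^* )(x)=x^*(\pi(g^{-1})x)$ and on $X^{**}$ by $(\pi(g)\zeta)(x^* )=\zeta(\pi(g^{-1})x^* )$, extending the action on $X$. *)

theory Defs
  imports "HOL-Analysis.Analysis" "HOL-Algebra.Group"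
begin

definition kappa :: "'a::real_normed_vector \<Rightarrow> (('a \<Rightarrow>\<^sub>L real) \<Rightarrow>\<^sub>L real)" where
  "kappa x = Blinfun (\<lambda>xs. blinfun_apply xs x)"

definition affine_isometry :: "('a::real_normed_vector \<Rightarrow> 'a) \<Rightarrow> bool" where
  "affine_isometry a \<longleftrightarrow>
     (\<exists>L b. linear L \<and> (\<forall>x. a x = L x + b)) \<and> (\<forall>x y. dist (a x) (a y) = dist x y)"

definition lin_part :: "('g \<Rightarrow> 'a::real_normed_vector \<Rightarrow> 'a) \<Rightarrow> 'g \<Rightarrow> 'a \<Rightarrow> 'a" where
  "lin_part act g x = act g x - act g 0"

definition dual_act :: "('g, 'm) monoid_scheme \<Rightarrow> ('g \<Rightarrow> 'a::real_normed_vector \<Rightarrow> 'a) \<Rightarrow> 'g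
    \<Rightarrow> ('a \<Rightarrow>\<^sub>L real) \<Rightarrow> ('a \<Rightarrow>\<^sub>L real)" where
  "dual_act G act g xs = Blinfun (\<lambda>x. blinfun_apply xs (lin_part act (inv\<^bsub>G\<^esub> g) x))"

definition bidual_act :: "('g, 'm) monoid_scheme \<Rightarrow> ('g \<Rightarrow> 'a::real_normed_vector \<Rightarrow> 'a) \<Rightarrow> 'g
    \<Rightarrow> (('a \<Rightarrow>\<^sub>L real) \<Rightarrow>\<^sub>L real) \<Rightarrow> (('a \<Rightarrow>\<^sub>L real) \<Rightarrow>\<^sub>L real)" where
  "bidual_act G act g z = Blinfun (\<lambda>xs. blinfun_apply z (dual_act G act (inv\<^bsub>G\<^esub> g) xs))"

end

theory Submission
  imports Defs
begin

text \<open>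
  The bidual action \<pi>(g) is a linear isometry of X** which maps \<kappa>(x) to \<kappa>(\<pi>(g) x), so it
  permutes the range \<kappa>(X) of Q. If f \<in> ker Q but Q(\<pi>(g) f) = \<pi>(g) y with y \<in> \<kappa>(X), y \<noteq> 0,
  then the strict inequality for \<pi>(g) f gives \<parallel>f\<parallel> > \<parallel>f - y\<parallel>, while Q(f - y) = -y \<noteq> 0
  gives \<parallel>f - y\<parallel> > \<parallel>f\<parallel>.
\<close>

lemma strict_projection_kernel_invariant:
  fixes Q :: "'b::real_normed_vector \<Rightarrow>\<^sub>L 'b" and T :: "'b \<Rightarrow> 'b"
  assumes proj: "\<And>f. Q (Q f) = Q f"
    and strict: "\<And>f. Q f \<noteq> 0 \<Longrightarrow> norm f > norm (f - Q f)"
    and T: "linear T" and norm_T: "\<And>z. norm (T z) = norm z"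
    and range_Q: "range (blinfun_apply Q) \<subseteq> T ` range (blinfun_apply Q)"
    and f: "Q f = 0"
  shows "Q (T f) = 0"
proof (rule ccontr)
  assume QTf: "Q (T f) \<noteq> 0"
  have "Q (T f) \<in> T ` range (blinfun_apply Q)"
    using range_Q by (rule subsetD) (rule rangeI)
  then obtain y where y: "y \<in> range (blinfun_apply Q)" and Ty: "T y = Q (T f)"
    by (metis imageE)
  have Qy: "Q y = y"
    using y proj by (metis rangeE)
  have "y \<noteq> 0"
    using Ty QTf linear_0[OF T] by auto
  have "norm (f - y) < norm f"
  proof -
    have "T f - Q (T f) = T (f - y)"
      using Ty by (simp add: linear_diff[OF T])
    then show ?thesis
      using strict[OF QTf] by (simp add: norm_T)
  qed
  moreover have "norm f < norm (f - y)"
  proof -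
    have "Q (f - y) = - y"
      using f Qy by (simp add: blinfun.diff_right)
    then show ?thesis
      using strict[of "f - y"] \<open>y \<noteq> 0\<close> by simp
  qed
  ultimately show False
    by simp
qed

lemma affine_isometry_lin_part:
  assumes "affine_isometry a"
  shows "bounded_linear (\<lambda>x. a x - a 0)" and "norm (a x - a 0) = norm x"
proof -
  obtain L b where L: "linear L" "\<And>x. a x = L x + b" and dist: "\<And>x y. dist (a x) (a y) = dist x y"
    using assms unfolding affine_isometry_def by blast
  have lin_part_eq: "(\<lambda>x. a x - a 0) = L"
    using L by (auto simp: linear_0)
  have norm_L: "norm (L x) = norm x" for x
    using dist[of x 0] L by (simp add: dist_norm linear_0)
  show "norm (a x - a 0) = norm x"
    using lin_part_eq norm_L by metis
  show "bounded_linear (\<lambda>x. a x - a 0)"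
    unfolding lin_part_eq
    by (rule bounded_linear_intro[where K=1]) (auto simp: linear_add[OF L(1)] linear_scale[OF L(1)] norm_L)
qed

lemma blinfun_apply_Blinfun_compose:
  assumes "bounded_linear P"
  shows "blinfun_apply (Blinfun (\<lambda>x. blinfun_apply f (P x))) = (\<lambda>x. f (P x))"
  by (rule bounded_linear_Blinfun_apply[OF bounded_linear_compose[OF blinfun.bounded_linear_right assms]])

lemma blinfun_apply_kappa: "blinfun_apply (kappa x) = (\<lambda>xs. xs x)"
  unfolding kappa_def by (rule bounded_linear_Blinfun_apply[OF blinfun.bounded_linear_left])

locale affine_isometric_action = group G for G :: "('g, 'm) monoid_scheme" (structure) +
  fixes act :: "'g \<Rightarrow> 'a::real_normed_vector \<Rightarrow> 'a"
  assumes affine_isometry_act: "g \<in> carrier G \<Longrightarrow> affine_isometry (act g)"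
    and act_one: "act \<one> = id"
    and act_mult: "g \<in> carrier G \<Longrightarrow> h \<in> carrier G \<Longrightarrow> act (g \<otimes> h) = act g \<circ> act h"
begin

lemma bounded_linear_lin_part: "g \<in> carrier G \<Longrightarrow> bounded_linear (lin_part act g)"
  using affine_isometry_lin_part(1)[OF affine_isometry_act] by (simp add: lin_part_def[abs_def])

lemma norm_lin_part: "g \<in> carrier G \<Longrightarrow> norm (lin_part act g x) = norm x"
  using affine_isometry_lin_part(2)[OF affine_isometry_act] by (simp add: lin_part_def)

lemma lin_part_mult:
  assumes "g \<in> carrier G" "h \<in> carrier G"
  shows "lin_part act (g \<otimes> h) x = lin_part act g (lin_part act h x)"
proof -
  have "linear (lin_part act g)"
    using bounded_linear_lin_part[OF assms(1)] bounded_linear.linear by blast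
  then have "lin_part act g (act h x - act h 0) = lin_part act g (act h x) - lin_part act g (act h 0)"
    by (rule linear_diff)
  then show ?thesis
    using act_mult[OF assms] by (simp add: lin_part_def)
qed

lemma lin_part_inv: "g \<in> carrier G \<Longrightarrow> lin_part act g (lin_part act (inv g) x) = x"
  using lin_part_mult[of g "inv g" x] act_one by (simp add: lin_part_def)

lemma lin_part_inv_left: "g \<in> carrier G \<Longrightarrow> lin_part act (inv g) (lin_part act g x) = x"
  using lin_part_inv[of "inv g" x] by simp

lemma dual_act_apply: "g \<in> carrier G \<Longrightarrow> blinfun_apply (dual_act G act g xs) = (\<lambda>x. xs (lin_part act (inv g) x))"
  unfolding dual_act_def by (rule blinfun_apply_Blinfun_compose[OF bounded_linear_lin_part]) simp

lemma norm_dual_act_le: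
  assumes "g \<in> carrier G"
  shows "norm (dual_act G act g xs) \<le> norm xs"
proof (rule norm_blinfun_bound)
  fix x
  show "norm (dual_act G act g xs x) \<le> norm xs * norm x"
    using norm_blinfun[of xs "lin_part act (inv g) x"] assms by (simp add: dual_act_apply norm_lin_part)
qed simp

lemma bounded_linear_dual_act:
  assumes "g \<in> carrier G"
  shows "bounded_linear (dual_act G act g)"
proof (rule bounded_linear_intro[where K=1])
  show "dual_act G act g (a + c) = dual_act G act g a + dual_act G act g c" for a c
    by (rule blinfun_eqI) (simp add: assms dual_act_apply blinfun.add_left)
  show "dual_act G act g (r *\<^sub>R a) = r *\<^sub>R dual_act G act g a" for r a
    by (rule blinfun_eqI) (simp add: assms dual_act_apply blinfun.scaleR_left)
  show "norm (dual_act G act g a) \<le> norm a * 1" for a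
    using norm_dual_act_le[OF assms] by simp
qed

lemma dual_act_inv: "g \<in> carrier G \<Longrightarrow> dual_act G act (inv g) (dual_act G act g xs) = xs"
  by (rule blinfun_eqI) (simp add: dual_act_apply lin_part_inv_left)

lemma bidual_act_apply:
  "g \<in> carrier G \<Longrightarrow> blinfun_apply (bidual_act G act g z) = (\<lambda>xs. z (dual_act G act (inv g) xs))"
  unfolding bidual_act_def by (rule blinfun_apply_Blinfun_compose[OF bounded_linear_dual_act]) simp

lemma linear_bidual_act:
  assumes "g \<in> carrier G"
  shows "linear (bidual_act G act g)"
proof (rule linearI)
  show "bidual_act G act g (a + c) = bidual_act G act g a + bidual_act G act g c" for a c
    by (rule blinfun_eqI) (simp add: assms bidual_act_apply blinfun.add_left)
  show "bidual_act G act g (r *\<^sub>R a) = r *\<^sub>R bidual_act G act g a" for r a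
    by (rule blinfun_eqI) (simp add: assms bidual_act_apply blinfun.scaleR_left)
qed

lemma norm_bidual_act_le:
  assumes "g \<in> carrier G"
  shows "norm (bidual_act G act g z) \<le> norm z"
proof (rule norm_blinfun_bound)
  fix xs
  have "norm (z (dual_act G act (inv g) xs)) \<le> norm z * norm (dual_act G act (inv g) xs)"
    by (rule norm_blinfun)
  also have "\<dots> \<le> norm z * norm xs"
    using assms by (simp add: mult_left_mono norm_dual_act_le)
  finally show "norm (bidual_act G act g z xs) \<le> norm z * norm xs"
    using assms by (simp add: bidual_act_apply)
qed simp

lemma bidual_act_inv: "g \<in> carrier G \<Longrightarrow> bidual_act G act (inv g) (bidual_act G act g z) = z"
  by (rule blinfun_eqI) (simp add: bidual_act_apply dual_act_inv)

lemma norm_bidual_act: "g \<in> carrier G \<Longrightarrow> norm (bidual_act G act g z) = norm z"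
  using norm_bidual_act_le[of g z] norm_bidual_act_le[of "inv g" "bidual_act G act g z"]
  by (simp add: bidual_act_inv)

lemma bidual_act_kappa: "g \<in> carrier G \<Longrightarrow> bidual_act G act g (kappa x) = kappa (lin_part act g x)"
  by (rule blinfun_eqI) (simp add: bidual_act_apply blinfun_apply_kappa dual_act_apply)

lemma range_kappa_subset_bidual_act_image:
  assumes "g \<in> carrier G"
  shows "range (kappa :: 'a \<Rightarrow> _) \<subseteq> bidual_act G act g ` range kappa"
proof (rule image_subsetI)
  fix x :: 'a
  have "kappa x = bidual_act G act g (kappa (lin_part act (inv g) x))"
    using assms by (simp add: bidual_act_kappa lin_part_inv)
  then show "kappa x \<in> bidual_act G act g ` range kappa"
    by (rule image_eqI) (rule rangeI)
qed

end

theorem lemma3p5: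
  fixes Q :: "(('a::banach \<Rightarrow>\<^sub>L real) \<Rightarrow>\<^sub>L real) \<Rightarrow>\<^sub>L (('a \<Rightarrow>\<^sub>L real) \<Rightarrow>\<^sub>L real)"
    and G :: "('g, 'm) monoid_scheme"
    and act :: "'g \<Rightarrow> 'a \<Rightarrow> 'a"
  assumes proj: "\<And>f. Q (Q f) = Q f"
    and range_Q: "range (blinfun_apply Q) = range kappa"
    and strict: "\<And>f. Q f \<noteq> 0 \<Longrightarrow> norm f > norm (f - Q f)"
    and grp: "group G"
    and aff: "\<And>g. g \<in> carrier G \<Longrightarrow> affine_isometry (act g)"
    and act_one: "act \<one>\<^bsub>G\<^esub> = id"
    and act_mult: "\<And>g h. g \<in> carrier G \<Longrightarrow> h \<in> carrier G \<Longrightarrow> act (g \<otimes>\<^bsub>G\<^esub> h) = act g \<circ> act h"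
  shows "\<forall>g \<in> carrier G. \<forall>f. Q f = 0 \<longrightarrow> Q (bidual_act G act g f) = 0"
proof (intro ballI allI impI)
  fix g f
  assume g: "g \<in> carrier G" and f: "Q f = 0"
  interpret affine_isometric_action G act
    using grp aff act_one act_mult
    by (simp add: affine_isometric_action_def affine_isometric_action_axioms_def)
  show "Q (bidual_act G act g f) = 0"
  proof (rule strict_projection_kernel_invariant[of Q "bidual_act G act g"])
    show "range (blinfun_apply Q) \<subseteq> bidual_act G act g ` range (blinfun_apply Q)"
      unfolding range_Q by (rule range_kappa_subset_bidual_act_image[OF g])
  qed (fact proj strict f linear_bidual_act[OF g] norm_bidual_act[OF g])+
qed

end
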